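(* Let $n\ge 1$ be an integer and $a,b,c:\{0,1,\dots,n+1\}\to\mathbb{R}$ with $a(k)\neq0$ and $c(k)\neq0$ for $k=0,\dots,n$. Let $\mathsf J(a,b,c)$ be the $(n+2)\times(n+2)$ tridiagonal matrix with rows and columns indexed by $0,\dots,n+1$, diagonal entries $\mathsf J_{kk}=b(k)$ ($k=0,\dots,n+1$), superdiagonal entries $\mathsf J_{k,k+1}=-a(k)$ and subdiagonal entries $\mathsf J_{k+1,k}=-c(k)$ ($k=0,\dots,n$), and all other entries $0$. Then $\mathsf J(a,b,c)$ is invertible if and only if $D_{\mathsf J}\neq0$, and in that case the entries of its inverse $\mathsf R=(r_{ks})_{k,s=0}^{n+1}$ are $$r_{ks}=\frac{1}{D_{\mathsf J}}\begin{cases}\Big(\prod_{j=k}^{s-1}a(j)\Big)\Phi_{\mathsf J}(k)\Psi_{\mathsf J}(s), & 0\le k\le s\le n+1,\\[1ex] \Big(\prod_{j=s}^{k-1}c(j)\Big)\Phi_{\mathsf J}(s)\Psi_{\mathsf J}(k), & 0\le s\le k\le n+1.\end{cases}$$ Moreover, $\det\mathsf R=D_{\mathsf J}^{-1}$.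
   Context: Empty products equal $1$ and empty sums equal $0$. For $m\in\mathbb{N}$ and a sequence $x$, the shift $x_m$ is $x_m(j)=x(j+m)$; $ac$ denotes the pointwise product $(ac)(j)=a(j)c(j)$. Chebyshev functions: for sequences $x,y$ set $P_{-1}(x,y)=0$, $P_0(x,y)=1$, and for $k\ge1$ $$P_k(x,y)=\sum_{m=0}^{\lfloor k/2\rfloor}(-1)^m\sum_{\alpha\in\ell_k^m}x^{\bar\alpha}y^{\alpha},$$ where: for $\alpha=(\alpha_1,\dots,\alpha_k)\in\{0,1\}^k$, $x^\alpha=\prod_{j=1}^k x(j)^{\alpha_j}$ and $|\alpha|=\sum_j\alpha_j$; $\ell_k^0=\{(0,\dots,0)\}$; for $m\ge1$, $\ell_k^m$ is the set of $\alpha\in\{0,1\}^k$ with $\alpha_k=0$, $|\alpha|=m$, and whose positions of ones $i_1<\dots<i_m$ satisfy $i_{j+1}-i_j\ge2$ for $j=1,\dots,m-1$; and $\bar\alpha\in\{0,1\}^k$ is defined by $\bar\alpha_{i_j}=\bar\alpha_{i_j+1}=0$ for $j=1,\dots,m$ and $\bar\alpha_i=1$ otherwise. Define $\Phi_{\mathsf J}(0)=1$, $\Phi_{\mathsf J}(k)=b(0)P_{k-1}(b,ac)-a(0)c(0)P_{k-2}(b_1,a_1c_1)$ for $k=1,\dots,n+1$; $\Psi_{\mathsf J}(k)=b(n+1)P_{n-k}(b_k,a_kc_k)-a(n)c(n)P_{n-k-1}(b_k,a_kc_k)$ for $k=0,\dots,n$, and $\Psi_{\mathsf J}(n+1)=1$;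 $D_{\mathsf J}=b(0)\big[b(n+1)P_n(b,ac)-a(n)c(n)P_{n-1}(b,ac)\big]-a(0)c(0)\big[b(n+1)P_{n-1}(b_1,a_1c_1)-a(n)c(n)P_{n-2}(b_1,a_1c_1)\big]$. *)

theory Defs
  imports "Jordan_Normal_Form.Determinant"
begin

definition shift :: "nat \<Rightarrow> (nat \<Rightarrow> real) \<Rightarrow> nat \<Rightarrow> real" where
  "shift m x = (\<lambda>j. x (j + m))"

definition pmul :: "(nat \<Rightarrow> real) \<Rightarrow> (nat \<Rightarrow> real) \<Rightarrow> nat \<Rightarrow> real" where
  "pmul x y = (\<lambda>j. x j * y j)"

definition bin_vecs :: "nat \<Rightarrow> (nat \<Rightarrow> nat) set" where
  "bin_vecs k = {\<alpha>. (\<forall>j. \<alpha> j \<in> {0,1}) \<and> (\<forall>j. j \<notin> {1..k} \<longrightarrow> \<alpha> j = 0)}"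

definition vpow :: "nat \<Rightarrow> (nat \<Rightarrow> real) \<Rightarrow> (nat \<Rightarrow> nat) \<Rightarrow> real" where
  "vpow k x \<alpha> = (\<Prod>j\<in>{1..k}. x j ^ \<alpha> j)"

definition ell :: "nat \<Rightarrow> nat \<Rightarrow> (nat \<Rightarrow> nat) set" where
  "ell k m = (if m = 0 then {\<lambda>_. 0}
     else {\<alpha>\<in>bin_vecs k. \<alpha> k = 0 \<and> (\<Sum>j\<in>{1..k}. \<alpha> j) = m \<and>
             (\<forall>i j. \<alpha> i = 1 \<and> \<alpha> j = 1 \<and> i < j \<longrightarrow> j - i \<ge> 2)})"

definition bar :: "nat \<Rightarrow> (nat \<Rightarrow> nat) \<Rightarrow> nat \<Rightarrow> nat" where
  "bar k \<alpha> = (\<lambda>i. if i \<in> {1..k} \<and> \<not> (\<alpha> i = 1 \<or> (i > 0 \<and> \<alpha> (i - 1) = 1)) then 1 else 0)"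

text \<open>Chebyshev functions P_k(x,y), k \<ge> -1 (value 0 for k < -1, never used).\<close>
definition chebP :: "(nat \<Rightarrow> real) \<Rightarrow> (nat \<Rightarrow> real) \<Rightarrow> int \<Rightarrow> real" where
  "chebP x y k = (if k = -1 then 0 else if k = 0 then 1 else if k < 0 then 0 else
     (\<Sum>m\<in>{0..nat k div 2}. (-1) ^ m *
        (\<Sum>\<alpha>\<in>ell (nat k) m. vpow (nat k) x (bar (nat k) \<alpha>) * vpow (nat k) y \<alpha>)))"

definition PhiJ :: "(nat \<Rightarrow> real) \<Rightarrow> (nat \<Rightarrow> real) \<Rightarrow> (nat \<Rightarrow> real) \<Rightarrow> nat \<Rightarrow> real" where
  "PhiJ a b c k = (if k = 0 then 1 else
     b 0 * chebP b (pmul a c) (int k - 1)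
     - a 0 * c 0 * chebP (shift 1 b) (shift 1 (pmul a c)) (int k - 2))"

definition PsiJ :: "nat \<Rightarrow> (nat \<Rightarrow> real) \<Rightarrow> (nat \<Rightarrow> real) \<Rightarrow> (nat \<Rightarrow> real) \<Rightarrow> nat \<Rightarrow> real" where
  "PsiJ n a b c k = (if k = n + 1 then 1 else
     b (n + 1) * chebP (shift k b) (shift k (pmul a c)) (int n - int k)
     - a n * c n * chebP (shift k b) (shift k (pmul a c)) (int n - int k - 1))"

definition DJ :: "nat \<Rightarrow> (nat \<Rightarrow> real) \<Rightarrow> (nat \<Rightarrow> real) \<Rightarrow> (nat \<Rightarrow> real) \<Rightarrow> real" where
  "DJ n a b c =
     b 0 * (b (n + 1) * chebP b (pmul a c) (int n) - a n * c n * chebP b (pmul a c) (int n - 1))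
   - a 0 * c 0 * (b (n + 1) * chebP (shift 1 b) (shift 1 (pmul a c)) (int n - 1)
                 - a n * c n * chebP (shift 1 b) (shift 1 (pmul a c)) (int n - 2))"

definition Jmat :: "nat \<Rightarrow> (nat \<Rightarrow> real) \<Rightarrow> (nat \<Rightarrow> real) \<Rightarrow> (nat \<Rightarrow> real) \<Rightarrow> real mat" where
  "Jmat n a b c = mat (n + 2) (n + 2) (\<lambda>(i, j).
     if i = j then b i else if j = i + 1 then - a i else if i = j + 1 then - c j else 0)"

definition Rmat :: "nat \<Rightarrow> (nat \<Rightarrow> real) \<Rightarrow> (nat \<Rightarrow> real) \<Rightarrow> (nat \<Rightarrow> real) \<Rightarrow> real mat" where
  "Rmat n a b c = mat (n + 2) (n + 2) (\<lambda>(k, s).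
     (1 / DJ n a b c) *
     (if k \<le> s then (\<Prod>j\<in>{k..<s}. a j) * PhiJ a b c k * PsiJ n a b c s
      else (\<Prod>j\<in>{s..<k}. c j) * PhiJ a b c s * PsiJ n a b c k))"

end

theory Submission
  imports Defs
begin

(* The leading principal minors \<phi>_k of the tridiagonal matrix J satisfy the three-term recurrence
   \<phi>_{k+1} = b(k) \<phi>_k - a(k-1) c(k-1) \<phi>_{k-1}, i.e. they are continuants, and so do the trailing
   minors \<psi>_k read backwards. The Chebyshev function P_k is a continuant of the shifted sequences,
   because its defining sum runs over the matchings of a path, which satisfy the same recurrence
   (the last vertex is either unmatched or matched to its predecessor). Hence \<Phi>_J = \<phi>, \<Psi>_J = \<psi>
   and D_J = det J. Multiplying J by the matrix D_J r_ks, the rows above and below the diagonal vanish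
   because \<phi> and \<psi> solve the recurrence there, while the diagonal entries are the Casoratian
   \<phi>_{k+1} \<psi>_k - a(k) c(k) \<phi>_k \<psi>_{k+1}, which is constant and equal to det J. *)

section \<open>Continuants\<close>

fun continuant :: "(nat \<Rightarrow> 'a::comm_ring_1) \<Rightarrow> (nat \<Rightarrow> 'a) \<Rightarrow> nat \<Rightarrow> 'a" where
  "continuant x y 0 = 1"
| "continuant x y (Suc 0) = x 0"
| "continuant x y (Suc (Suc m)) = x (Suc m) * continuant x y (Suc m) - y m * continuant x y m"

lemma continuant_Suc_Suc_left:
  "continuant x y (Suc (Suc m)) =
     x 0 * continuant (\<lambda>j. x (Suc j)) (\<lambda>j. y (Suc j)) (Suc m)
     - y 0 * continuant (\<lambda>j. x (Suc (Suc j))) (\<lambda>j. y (Suc (Suc j))) m"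
proof (induction m rule: induct_nat_012)
  case (ge2 m)
  then show ?case
    by (simp only: continuant.simps(3)[of x y "Suc (Suc m)"]) (simp add: algebra_simps)
qed (simp_all add: algebra_simps)

(* The minor on the indices k+1 .. n+1 of the (n+2) x (n+2) tridiagonal matrix. *)
definition tail_continuant :: "nat \<Rightarrow> (nat \<Rightarrow> 'a::comm_ring_1) \<Rightarrow> (nat \<Rightarrow> 'a) \<Rightarrow> nat \<Rightarrow> 'a" where
  "tail_continuant n x y k = continuant (\<lambda>j. x (j + Suc k)) (\<lambda>j. y (j + Suc k)) (n + 1 - k)"

lemma tail_continuant_Suc_self [simp]: "tail_continuant n x y (Suc n) = 1"
  by (simp add: tail_continuant_def)

lemma tail_continuant_self [simp]: "tail_continuant n x y n = x (Suc n)"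
  by (simp add: tail_continuant_def)

lemma tail_continuant_rec:
  assumes "i < n"
  shows "tail_continuant n x y i =
    x (Suc i) * tail_continuant n x y (Suc i) - y (Suc i) * tail_continuant n x y (Suc (Suc i))"
proof -
  from assms have "n + 1 - i = Suc (Suc (n - Suc i))" and "n + 1 - Suc i = Suc (n - Suc i)"
    by simp_all
  then show ?thesis
    unfolding tail_continuant_def by (simp only: continuant_Suc_Suc_left) simp
qed

lemma continuant_wronskian:
  assumes "i \<le> n"
  shows "continuant x y (Suc i) * tail_continuant n x y i - y i * continuant x y i * tail_continuant n x y (Suc i)
    = continuant x y (n + 2)"
  using assms
proof (induction i)
  case 0
  show ?case
    using continuant_Suc_Suc_left[of x y n] by (simp add: tail_continuant_def numeral_2_eq_2)
next
  case (Suc i)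
  then show ?case
    by (simp add: tail_continuant_rec[of i n x y] algebra_simps)
qed

section \<open>Chebyshev functions as sums over matchings of a path\<close>

(* \<alpha> j = 1 selects the edge {j, j+1} of the path 1 - 2 - ... - k; then bar k \<alpha> marks the vertices
   left uncovered by the matching. *)
definition path_matchings :: "nat \<Rightarrow> (nat \<Rightarrow> nat) set" where
  "path_matchings k =
     {\<alpha>. (\<forall>j. \<alpha> j \<le> 1) \<and> (\<forall>j. \<alpha> j \<noteq> 0 \<longrightarrow> 1 \<le> j \<and> j < k) \<and> (\<forall>j. \<alpha> j = 0 \<or> \<alpha> (Suc j) = 0)}"

lemma mem_path_matchingsI:
  assumes "\<And>j. \<alpha> j \<le> 1" and "\<And>j. \<alpha> j \<noteq> 0 \<Longrightarrow> 1 \<le> j \<and> j < k"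
    and "\<And>j. \<alpha> j = 0 \<or> \<alpha> (Suc j) = 0"
  shows "\<alpha> \<in> path_matchings k"
  using assms by (simp add: path_matchings_def)

lemma path_matchingsD:
  assumes "\<alpha> \<in> path_matchings k"
  shows "\<alpha> j \<le> 1" and "\<alpha> j = 0 \<or> \<alpha> (Suc j) = 0"
  using assms by (simp_all add: path_matchings_def)

lemma path_matchings_support: "0 < \<alpha> j \<Longrightarrow> \<alpha> \<in> path_matchings k \<Longrightarrow> 1 \<le> j \<and> j < k"
  by (simp add: path_matchings_def)

lemma zero_in_path_matchings: "(\<lambda>_. 0) \<in> path_matchings k"
  by (simp add: path_matchings_def)

lemma path_matchings_le_1:
  assumes "k \<le> 1"
  shows "path_matchings k = {\<lambda>_. 0}"
proof -
  have "\<alpha> j = 0" if "\<alpha> \<in> path_matchings k" for \<alpha> j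
    using path_matchings_support[of \<alpha> j k] that assms by linarith
  then show ?thesis
    using zero_in_path_matchings by blast
qed

lemma path_matchings_vanish: "\<alpha> \<in> path_matchings k \<Longrightarrow> k \<le> j \<Longrightarrow> \<alpha> j = 0"
  using path_matchings_support not_le by blast

lemma path_matchings_Suc_Suc:
  "path_matchings (Suc (Suc k)) = path_matchings (Suc k) \<union> (\<lambda>\<alpha>. \<alpha>(Suc k := 1)) ` path_matchings k"
proof (intro equalityI subsetI)
  fix \<alpha>
  assume \<alpha>: "\<alpha> \<in> path_matchings (Suc (Suc k))"
  show "\<alpha> \<in> path_matchings (Suc k) \<union> (\<lambda>\<alpha>. \<alpha>(Suc k := 1)) ` path_matchings k"
  proof (cases "\<alpha> (Suc k) = 0")
    case True
    have "1 \<le> j \<and> j < Suc k" if "\<alpha> j \<noteq> 0" for j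
      using path_matchings_support[OF _ \<alpha>, of j] that True by (cases "j = Suc k") auto
    then have "\<alpha> \<in> path_matchings (Suc k)"
      using path_matchingsD[OF \<alpha>] by (intro mem_path_matchingsI)
    then show ?thesis ..
  next
    case False
    then have "\<alpha> (Suc k) = 1" and "\<alpha> k = 0"
      using path_matchingsD(1)[OF \<alpha>, of "Suc k"] path_matchingsD(2)[OF \<alpha>, of k] by auto
    moreover have "1 \<le> j \<and> j < k" if "\<alpha> j \<noteq> 0" "j \<noteq> Suc k" for j
      using path_matchings_support[OF _ \<alpha>, of j] that \<open>\<alpha> k = 0\<close> by (cases "j = k") auto
    ultimately have "\<alpha>(Suc k := 0) \<in> path_matchings k"
      using path_matchingsD[OF \<alpha>] by (intro mem_path_matchingsI) (auto split: if_splits)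
    moreover have "\<alpha> = (\<alpha>(Suc k := 0))(Suc k := 1)"
      using \<open>\<alpha> (Suc k) = 1\<close> by (simp add: fun_eq_iff)
    ultimately show ?thesis
      by blast
  qed
next
  fix \<alpha>
  assume "\<alpha> \<in> path_matchings (Suc k) \<union> (\<lambda>\<alpha>. \<alpha>(Suc k := 1)) ` path_matchings k"
  then consider "\<alpha> \<in> path_matchings (Suc k)" | \<beta> where "\<beta> \<in> path_matchings k" "\<alpha> = \<beta>(Suc k := 1)"
    by blast
  then show "\<alpha> \<in> path_matchings (Suc (Suc k))"
  proof cases
    case 1
    then show ?thesis
      by (intro mem_path_matchingsI) (auto dest: path_matchingsD path_matchings_support)
  next
    case (2 \<beta>)
    then have "\<beta> k = 0" "\<beta> (Suc (Suc k)) = 0"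
      by (simp_all add: path_matchings_vanish)
    then show ?thesis
      using 2 by (intro mem_path_matchingsI) (auto dest: path_matchingsD path_matchings_support)
  qed
qed

lemma finite_path_matchings: "finite (path_matchings k)"
  by (induction k rule: induct_nat_012) (simp_all add: path_matchings_le_1 path_matchings_Suc_Suc)

lemma path_matching_size_le: "\<alpha> \<in> path_matchings k \<Longrightarrow> (\<Sum>j\<in>{1..k}. \<alpha> j) \<le> k div 2"
proof (induction k arbitrary: \<alpha> rule: induct_nat_012)
  case (ge2 k)
  from ge2.prems consider "\<alpha> \<in> path_matchings (Suc k)" | \<beta> where "\<beta> \<in> path_matchings k" "\<alpha> = \<beta>(Suc k := 1)"
    unfolding path_matchings_Suc_Suc by blast
  then show ?case
  proof cases
    case 1
    then have "(\<Sum>j\<in>{1..Suc (Suc k)}. \<alpha> j) = (\<Sum>j\<in>{1..Suc k}. \<alpha> j)"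
      by (simp add: path_matchings_vanish)
    also have "\<dots> \<le> Suc (Suc k) div 2"
      using ge2.IH(2)[OF 1] by linarith
    finally show ?thesis .
  next
    case (2 \<beta>)
    then have "(\<Sum>j\<in>{1..Suc (Suc k)}. \<alpha> j) = (\<Sum>j\<in>{1..k}. \<beta> j) + 1"
      by (simp add: path_matchings_vanish)
    then show ?thesis
      using ge2.IH(1)[OF 2(1)] by simp
  qed
qed (simp_all add: path_matchings_le_1)

lemma path_matchings_eq_separated:
  "path_matchings k =
     {\<alpha> \<in> bin_vecs k. \<alpha> k = 0 \<and> (\<forall>i j. \<alpha> i = 1 \<and> \<alpha> j = 1 \<and> i < j \<longrightarrow> j - i \<ge> 2)}"
proof (intro equalityI subsetI CollectI conjI)
  fix \<alpha>
  assume \<alpha>: "\<alpha> \<in> path_matchings k"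
  have "\<alpha> j \<in> {0, 1}" for j
    using path_matchingsD(1)[OF \<alpha>, of j] by auto
  moreover have "\<alpha> j = 0" if "j \<notin> {1..k}" for j
    using that path_matchings_support[OF _ \<alpha>, of j] by (cases "\<alpha> j = 0") auto
  ultimately show "\<alpha> \<in> bin_vecs k"
    unfolding bin_vecs_def by blast
  show "\<alpha> k = 0"
    using \<alpha> by (simp add: path_matchings_vanish)
  show "\<forall>i j. \<alpha> i = 1 \<and> \<alpha> j = 1 \<and> i < j \<longrightarrow> j - i \<ge> 2"
  proof (intro allI impI)
    fix i j
    assume "\<alpha> i = 1 \<and> \<alpha> j = 1 \<and> i < j"
    moreover have "j \<noteq> Suc i \<or> \<alpha> i = 0 \<or> \<alpha> j = 0"
      using path_matchingsD(2)[OF \<alpha>, of i] by auto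
    ultimately show "j - i \<ge> 2"
      by auto
  qed
next
  fix \<alpha>
  assume "\<alpha> \<in> {\<alpha> \<in> bin_vecs k. \<alpha> k = 0 \<and> (\<forall>i j. \<alpha> i = 1 \<and> \<alpha> j = 1 \<and> i < j \<longrightarrow> j - i \<ge> 2)}"
  then have bin: "\<And>j. \<alpha> j = 0 \<or> \<alpha> j = 1" and supp: "\<And>j. j \<notin> {1..k} \<Longrightarrow> \<alpha> j = 0"
    and "\<alpha> k = 0" and sep: "\<And>i j. \<alpha> i = 1 \<Longrightarrow> \<alpha> j = 1 \<Longrightarrow> i < j \<Longrightarrow> j - i \<ge> 2"
    unfolding bin_vecs_def by blast+
  show "\<alpha> \<in> path_matchings k"
  proof (rule mem_path_matchingsI)
    show "\<alpha> j \<le> 1" for j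
      using bin[of j] by auto
    show "1 \<le> j \<and> j < k" if "\<alpha> j \<noteq> 0" for j
    proof -
      have "j \<in> {1..k}"
        using that supp[of j] by argo
      moreover have "j \<noteq> k"
        using that \<open>\<alpha> k = 0\<close> by auto
      ultimately show ?thesis
        by auto
    qed
    show "\<alpha> j = 0 \<or> \<alpha> (Suc j) = 0" for j
      using bin[of j] bin[of "Suc j"] sep[of j "Suc j"] by auto
  qed
qed

lemma ell_eq_path_matchings: "ell k m = {\<alpha> \<in> path_matchings k. (\<Sum>j\<in>{1..k}. \<alpha> j) = m}"
proof (cases "m = 0")
  case True
  have "\<alpha> j = 0" if "\<alpha> \<in> path_matchings k" and "(\<Sum>j\<in>{1..k}. \<alpha> j) = 0" for \<alpha> j
  proof (cases "j \<in> {1..k}")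
    case True
    then show ?thesis
      using that(2) by simp
  next
    case False
    then show ?thesis
      using path_matchings_support[OF _ that(1), of j] by (cases "\<alpha> j = 0") auto
  qed
  then have "{\<alpha> \<in> path_matchings k. (\<Sum>j\<in>{1..k}. \<alpha> j) = 0} = {\<lambda>_. 0}"
    using zero_in_path_matchings by (auto intro: ext)
  then show ?thesis
    using True by (simp add: ell_def)
next
  case False
  then show ?thesis
    unfolding ell_def if_not_P[OF False] path_matchings_eq_separated by blast
qed

definition matching_weight :: "nat \<Rightarrow> (nat \<Rightarrow> real) \<Rightarrow> (nat \<Rightarrow> real) \<Rightarrow> (nat \<Rightarrow> nat) \<Rightarrow> real" where
  "matching_weight k x y \<alpha> = (-1) ^ (\<Sum>j\<in>{1..k}. \<alpha> j) * vpow k x (bar k \<alpha>) * vpow k y \<alpha>"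

lemma vpow_Suc: "vpow (Suc k) x \<alpha> = vpow k x \<alpha> * x (Suc k) ^ \<alpha> (Suc k)"
  by (simp add: vpow_def prod.cl_ivl_Suc)

lemma vpow_cong: "(\<And>j. 1 \<le> j \<Longrightarrow> j \<le> k \<Longrightarrow> \<alpha> j = \<beta> j) \<Longrightarrow> vpow k x \<alpha> = vpow k x \<beta>"
  unfolding vpow_def by (rule prod.cong) auto

lemma matching_weight_unmatched_last:
  assumes "\<alpha> \<in> path_matchings (Suc k)"
  shows "matching_weight (Suc (Suc k)) x y \<alpha> = x (Suc (Suc k)) * matching_weight (Suc k) x y \<alpha>"
proof -
  have "\<alpha> (Suc k) = 0" and "\<alpha> (Suc (Suc k)) = 0"
    using assms by (simp_all add: path_matchings_vanish)
  moreover have "vpow (Suc k) x (bar (Suc (Suc k)) \<alpha>) = vpow (Suc k) x (bar (Suc k) \<alpha>)"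
    by (rule vpow_cong) (simp add: bar_def)
  ultimately show ?thesis
    by (simp add: matching_weight_def vpow_Suc[of "Suc k"] bar_def sum.cl_ivl_Suc)
qed

lemma matching_weight_matched_last:
  assumes "\<alpha> \<in> path_matchings k"
  shows "matching_weight (Suc (Suc k)) x y (\<alpha>(Suc k := 1)) = - y (Suc k) * matching_weight k x y \<alpha>"
proof -
  have "\<alpha> (Suc (Suc k)) = 0"
    using assms by (simp add: path_matchings_vanish)
  moreover have "vpow k x (bar (Suc (Suc k)) (\<alpha>(Suc k := 1))) = vpow k x (bar k \<alpha>)"
    by (rule vpow_cong) (auto simp: bar_def)
  moreover have "vpow k y (\<alpha>(Suc k := 1)) = vpow k y \<alpha>"
    by (rule vpow_cong) simp
  moreover have "(\<Sum>j\<in>{1..k}. (\<alpha>(Suc k := 1)) j) = (\<Sum>j\<in>{1..k}. \<alpha> j)"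
    by (rule sum.cong) auto
  ultimately show ?thesis
    by (simp add: matching_weight_def vpow_Suc bar_def sum.cl_ivl_Suc)
qed

lemma sum_matching_weight:
  "(\<Sum>\<alpha>\<in>path_matchings k. matching_weight k x y \<alpha>) = continuant (shift 1 x) (shift 1 y) k"
proof (induction k rule: induct_nat_012)
  case 0
  then show ?case
    by (simp add: path_matchings_le_1 matching_weight_def vpow_def)
next
  case 1
  then show ?case
    by (simp add: path_matchings_le_1 matching_weight_def vpow_def bar_def shift_def)
next
  case (ge2 k)
  let ?add = "\<lambda>\<alpha>. \<alpha>(Suc k := 1)"
  have inj: "inj_on ?add (path_matchings k)"
    by (rule inj_onI) (metis fun_upd_idem fun_upd_upd le_SucI order_refl path_matchings_vanish)
  have disj: "path_matchings (Suc k) \<inter> ?add ` path_matchings k = {}"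
    using path_matchings_vanish by fastforce
  have "(\<Sum>\<alpha>\<in>path_matchings (Suc (Suc k)). matching_weight (Suc (Suc k)) x y \<alpha>)
      = (\<Sum>\<alpha>\<in>path_matchings (Suc k). matching_weight (Suc (Suc k)) x y \<alpha>)
        + (\<Sum>\<alpha>\<in>path_matchings k. matching_weight (Suc (Suc k)) x y (?add \<alpha>))"
    unfolding path_matchings_Suc_Suc sum.reindex[OF inj]
      sum.union_disjoint[OF finite_path_matchings finite_imageI[OF finite_path_matchings] disj]
    by (simp only: comp_def)
  also have "\<dots> = (\<Sum>\<alpha>\<in>path_matchings (Suc k). x (Suc (Suc k)) * matching_weight (Suc k) x y \<alpha>)
      + (\<Sum>\<alpha>\<in>path_matchings k. - y (Suc k) * matching_weight k x y \<alpha>)"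
    using matching_weight_unmatched_last matching_weight_matched_last
    by (intro arg_cong2[where f = "(+)"] sum.cong) auto
  also have "\<dots> = x (Suc (Suc k)) * continuant (shift 1 x) (shift 1 y) (Suc k)
      - y (Suc k) * continuant (shift 1 x) (shift 1 y) k"
    by (simp add: sum_distrib_left[symmetric] sum_negf ge2.IH)
  finally show ?case
    by (simp add: shift_def)
qed

lemma chebP_eq_continuant: "chebP x y (int k) = continuant (shift 1 x) (shift 1 y) k"
proof (cases "k = 0")
  case False
  have "(\<Sum>\<alpha>\<in>path_matchings k. matching_weight k x y \<alpha>)
      = (\<Sum>m\<in>{0..k div 2}. \<Sum>\<alpha>\<in>{\<alpha> \<in> path_matchings k. (\<Sum>j\<in>{1..k}. \<alpha> j) = m}. matching_weight k x y \<alpha>)"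
    by (rule sum.group[symmetric]) (use finite_path_matchings path_matching_size_le in auto)
  also have "\<dots> = (\<Sum>m\<in>{0..k div 2}. (-1) ^ m * (\<Sum>\<alpha>\<in>ell k m. vpow k x (bar k \<alpha>) * vpow k y \<alpha>))"
    unfolding ell_eq_path_matchings sum_distrib_left by (intro sum.cong refl) (simp add: matching_weight_def)
  finally show ?thesis
    using False by (simp add: chebP_def sum_matching_weight)
qed (simp add: chebP_def)

lemma chebP_Suc:
  "chebP x y (int k + 1) = x (Suc k) * chebP x y (int k) - y k * chebP x y (int k - 1)"
proof (cases k)
  case 0
  then show ?thesis
    using chebP_eq_continuant[of x y 1] by (simp add: chebP_def shift_def)
next
  case (Suc p)
  then have "int k + 1 = int (Suc (Suc p))" and "int k - 1 = int p"
    by simp_all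
  then show ?thesis
    using Suc by (simp only: chebP_eq_continuant) (simp add: shift_def)
qed

section \<open>Tridiagonal matrices and their adjugates\<close>

definition tridiag_mat :: "nat \<Rightarrow> (nat \<Rightarrow> 'a::comm_ring_1) \<Rightarrow> (nat \<Rightarrow> 'a) \<Rightarrow> (nat \<Rightarrow> 'a) \<Rightarrow> 'a mat" where
  "tridiag_mat m a b c = mat m m (\<lambda>(i, j).
     if i = j then b i else if j = i + 1 then - a i else if i = j + 1 then - c j else 0)"

lemma tridiag_mat_carrier [simp]: "tridiag_mat m a b c \<in> carrier_mat m m"
  unfolding tridiag_mat_def by simp

lemma dim_tridiag_mat [simp]:
  "dim_row (tridiag_mat m a b c) = m" "dim_col (tridiag_mat m a b c) = m"
  unfolding tridiag_mat_def by simp_all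

lemma mat_delete_tridiag_mat_last:
  "mat_delete (tridiag_mat (Suc m) a b c) m m = tridiag_mat m a b c"
  by (rule eq_matI) (auto simp: mat_delete_def tridiag_mat_def)

lemma det_mat_delete_tridiag_mat_sub:
  "det (mat_delete (tridiag_mat (Suc (Suc m)) a b c) m (Suc m)) = - c m * det (tridiag_mat m a b c)"
proof -
  define M where "M = mat_delete (tridiag_mat (Suc (Suc m)) a b c) m (Suc m)"
  have M: "M \<in> carrier_mat (Suc m) (Suc m)"
    unfolding M_def mat_delete_def tridiag_mat_def by simp
  have M_delete: "mat_delete M m m = tridiag_mat m a b c"
    by (rule eq_matI) (auto simp: M_def mat_delete_def tridiag_mat_def)
  have "(\<Sum>j<m. M $$ (m, j) * cofactor M m j) = 0"
    by (rule sum.neutral) (auto simp: M_def mat_delete_def tridiag_mat_def)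
  moreover have "det M = (\<Sum>j<Suc m. M $$ (m, j) * cofactor M m j)"
    using M by (rule laplace_expansion_row) simp
  ultimately have "det M = M $$ (m, m) * cofactor M m m"
    by simp
  then show ?thesis
    unfolding M_def[symmetric] by (simp add: cofactor_def M_delete)
      (simp add: M_def mat_delete_def tridiag_mat_def)
qed

lemma det_tridiag_mat: "det (tridiag_mat m a b c) = continuant b (\<lambda>i. a i * c i) m"
proof (induction m rule: induct_nat_012)
  case 0
  then show ?case by (simp add: det_dim_zero)
next
  case 1
  then show ?case by (simp add: det_single tridiag_mat_def)
next
  case (ge2 m)
  let ?A = "tridiag_mat (Suc (Suc m)) a b c"
  let ?f = "\<lambda>i. ?A $$ (i, Suc m) * cofactor ?A i (Suc m)"
  have "(\<Sum>i<m. ?f i) = 0"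
    by (rule sum.neutral) (auto simp: tridiag_mat_def)
  moreover have "det ?A = (\<Sum>i<Suc (Suc m). ?f i)"
    by (rule laplace_expansion_column) auto
  ultimately have "det ?A = ?f m + ?f (Suc m)"
    by simp
  also have "\<dots> = b (Suc m) * det (tridiag_mat (Suc m) a b c) - a m * c m * det (tridiag_mat m a b c)"
    by (simp add: cofactor_def mat_delete_tridiag_mat_last det_mat_delete_tridiag_mat_sub)
       (simp add: tridiag_mat_def)
  finally show ?case using ge2 by simp
qed

lemma tridiag_mat_mult_index:
  assumes "M \<in> carrier_mat m m'" and "i < m" and "s < m'"
  shows "(tridiag_mat m a b c * M) $$ (i, s) =
    b i * M $$ (i, s) - (if Suc i < m then a i * M $$ (Suc i, s) else 0)
      - (if i = 0 then 0 else c (i - 1) * M $$ (i - 1, s))"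
proof -
  have row: "tridiag_mat m a b c $$ (i, j) =
      (if j = i then b i else 0) + (if j = Suc i then - a i else 0) + (if Suc j = i then - c j else 0)"
    if "j < m" for j
    using that assms(2) by (auto simp: tridiag_mat_def)
  have "(tridiag_mat m a b c * M) $$ (i, s) = (\<Sum>j<m. tridiag_mat m a b c $$ (i, j) * M $$ (j, s))"
    using assms by (simp add: scalar_prod_def lessThan_atLeast0 carrier_matD)
  also have "\<dots> = (\<Sum>j<m. (if j = i then b i * M $$ (j, s) else 0)
      + (if j = Suc i then - a i * M $$ (j, s) else 0) + (if j = i - 1 \<and> i \<noteq> 0 then - c j * M $$ (j, s) else 0))"
    by (rule sum.cong) (auto simp: row distrib_right)
  also have "\<dots> = b i * M $$ (i, s) - (if Suc i < m then a i * M $$ (Suc i, s) else 0)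
      - (if i = 0 then 0 else c (i - 1) * M $$ (i - 1, s))"
    using assms(2) by (simp add: sum.distrib sum.delta)
  finally show ?thesis .
qed

(* D_J r_ks in the notation of the paper. *)
definition tridiag_adj_entry ::
    "nat \<Rightarrow> (nat \<Rightarrow> 'a::comm_ring_1) \<Rightarrow> (nat \<Rightarrow> 'a) \<Rightarrow> (nat \<Rightarrow> 'a) \<Rightarrow> nat \<Rightarrow> nat \<Rightarrow> 'a" where
  "tridiag_adj_entry n a b c k s =
     (if k \<le> s
      then (\<Prod>j\<in>{k..<s}. a j) * continuant b (\<lambda>i. a i * c i) k * tail_continuant n b (\<lambda>i. a i * c i) s
      else (\<Prod>j\<in>{s..<k}. c j) * continuant b (\<lambda>i. a i * c i) s * tail_continuant n b (\<lambda>i. a i * c i) k)"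

definition tridiag_adj :: "nat \<Rightarrow> (nat \<Rightarrow> 'a::comm_ring_1) \<Rightarrow> (nat \<Rightarrow> 'a) \<Rightarrow> (nat \<Rightarrow> 'a) \<Rightarrow> 'a mat" where
  "tridiag_adj n a b c = mat (n + 2) (n + 2) (\<lambda>(k, s). tridiag_adj_entry n a b c k s)"

lemma tridiag_adj_carrier [simp]: "tridiag_adj n a b c \<in> carrier_mat (n + 2) (n + 2)"
  unfolding tridiag_adj_def by simp

lemma tridiag_row_adj_entry_above:
  assumes "i < s"
  shows "b i * tridiag_adj_entry n a b c i s - a i * tridiag_adj_entry n a b c (Suc i) s
    - (if i = 0 then 0 else c (i - 1) * tridiag_adj_entry n a b c (i - 1) s) = 0"
proof -
  let ?A = "\<lambda>k. \<Prod>j\<in>{k..<s}. a j"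
  have A_i: "?A i = a i * ?A (Suc i)"
    using assms by (rule prod.atLeast_Suc_lessThan)
  show ?thesis
  proof (cases i)
    case 0
    then show ?thesis
      using assms A_i by (simp add: tridiag_adj_entry_def)
  next
    case (Suc i')
    have A_i': "?A i' = a i' * ?A i"
      using assms Suc prod.atLeast_Suc_lessThan[of i' s a] by simp
    show ?thesis
      using assms A_i A_i' unfolding Suc by (simp add: tridiag_adj_entry_def algebra_simps)
  qed
qed

lemma tridiag_row_adj_entry_below:
  assumes "s \<le> i" and "i \<le> n"
  shows "b (Suc i) * tridiag_adj_entry n a b c (Suc i) s
    - (if i < n then a (Suc i) * tridiag_adj_entry n a b c (Suc (Suc i)) s else 0)
    - c i * tridiag_adj_entry n a b c i s = 0"
proof -
  let ?C = "\<lambda>k. \<Prod>j\<in>{s..<k}. c j"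
  let ?\<psi> = "tail_continuant n b (\<lambda>i. a i * c i)"
  have entry: "tridiag_adj_entry n a b c k s = ?C k * continuant b (\<lambda>i. a i * c i) s * ?\<psi> k"
    if "s \<le> k" for k
    using that by (cases "k = s") (simp_all add: tridiag_adj_entry_def)
  have C_Suc: "?C (Suc i) = ?C i * c i" and C_Suc_Suc: "?C (Suc (Suc i)) = ?C i * c i * c (Suc i)"
    using assms(1) by (simp_all add: prod.atLeastLessThan_Suc)
  show ?thesis
  proof (cases "i < n")
    case True
    then have rec: "?\<psi> i = b (Suc i) * ?\<psi> (Suc i) - a (Suc i) * c (Suc i) * ?\<psi> (Suc (Suc i))"
      by (rule tail_continuant_rec)
    show ?thesis
      using True assms(1) by (simp add: entry C_Suc C_Suc_Suc rec algebra_simps)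
  next
    case False
    then show ?thesis
      using assms by (simp add: entry C_Suc algebra_simps)
  qed
qed

lemma tridiag_row_adj_entry_diag:
  assumes "i \<le> Suc n"
  shows "b i * tridiag_adj_entry n a b c i i - (if i < Suc n then a i * tridiag_adj_entry n a b c (Suc i) i else 0)
    - (if i = 0 then 0 else c (i - 1) * tridiag_adj_entry n a b c (i - 1) i) = continuant b (\<lambda>i. a i * c i) (n + 2)"
proof -
  let ?\<phi> = "continuant b (\<lambda>i. a i * c i)"
  let ?\<psi> = "tail_continuant n b (\<lambda>i. a i * c i)"
  have "b i * tridiag_adj_entry n a b c i i - (if i < Suc n then a i * tridiag_adj_entry n a b c (Suc i) i else 0)
      - (if i = 0 then 0 else c (i - 1) * tridiag_adj_entry n a b c (i - 1) i)
      = ?\<phi> (Suc i) * ?\<psi> i - (if i < Suc n then a i * c i * ?\<phi> i * ?\<psi> (Suc i) else 0)"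
    by (cases i) (simp_all add: tridiag_adj_entry_def algebra_simps)
  also have "\<dots> = ?\<phi> (n + 2)"
  proof (cases "i < Suc n")
    case True
    then show ?thesis
      using continuant_wronskian[of i n b] by simp
  next
    case False
    then show ?thesis
      using assms by (simp add: numeral_2_eq_2)
  qed
  finally show ?thesis .
qed

lemma tridiag_mat_mult_adj:
  "tridiag_mat (n + 2) a b c * tridiag_adj n a b c = det (tridiag_mat (n + 2) a b c) \<cdot>\<^sub>m 1\<^sub>m (n + 2)"
proof (rule eq_matI)
  fix i s
  assume "i < dim_row (det (tridiag_mat (n + 2) a b c) \<cdot>\<^sub>m 1\<^sub>m (n + 2))"
    and "s < dim_col (det (tridiag_mat (n + 2) a b c) \<cdot>\<^sub>m 1\<^sub>m (n + 2))"
  then have i: "i \<le> Suc n" and s: "s \<le> Suc n"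
    by auto
  let ?r = "tridiag_adj_entry n a b c"
  have "(tridiag_mat (n + 2) a b c * tridiag_adj n a b c) $$ (i, s) =
      b i * ?r i s - (if i < Suc n then a i * ?r (Suc i) s else 0) - (if i = 0 then 0 else c (i - 1) * ?r (i - 1) s)"
    using i s by (subst tridiag_mat_mult_index[OF tridiag_adj_carrier]) (auto simp: tridiag_adj_def)
  also have "\<dots> = (if i = s then continuant b (\<lambda>i. a i * c i) (n + 2) else 0)"
  proof -
    consider "i < s" | "s < i" | "i = s"
      by linarith
    then show ?thesis
    proof cases
      case 1
      then show ?thesis
        using tridiag_row_adj_entry_above[of i s b n a c] s by simp
    next
      case 2
      then obtain i' where "i = Suc i'" and "s \<le> i'"
        by (cases i) auto
      then show ?thesis
        using tridiag_row_adj_entry_below[of s i' n b a c] i by (simp split: if_splits)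
    next
      case 3
      show ?thesis
        unfolding 3[symmetric] if_P[OF refl] by (rule tridiag_row_adj_entry_diag[OF i])
    qed
  qed
  finally show "(tridiag_mat (n + 2) a b c * tridiag_adj n a b c) $$ (i, s) =
      (det (tridiag_mat (n + 2) a b c) \<cdot>\<^sub>m 1\<^sub>m (n + 2)) $$ (i, s)"
    using i s by (simp add: det_tridiag_mat)
qed (simp_all add: tridiag_adj_def)

lemma invertible_mat_iff_det_nonzero:
  fixes A :: "'a::field mat"
  assumes A: "A \<in> carrier_mat n n"
  shows "invertible_mat A \<longleftrightarrow> det A \<noteq> 0"
proof
  assume "invertible_mat A"
  then obtain B where AB: "A * B = 1\<^sub>m n" and "B * A = 1\<^sub>m (dim_row B)"
    using A unfolding invertible_mat_def inverts_mat_def by auto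
  then have B: "B \<in> carrier_mat n n"
    using A by (metis carrier_matD carrier_matI index_mult_mat(2,3) index_one_mat(2,3))
  have "det A * det B = 1"
    using det_mult[OF A B] AB by simp
  then show "det A \<noteq> 0"
    by auto
next
  assume "det A \<noteq> 0"
  then have "A \<in> Units (ring_mat TYPE('a) n undefined)"
    by (rule det_non_zero_imp_unit[OF A])
  then obtain B where "B \<in> carrier_mat n n" "B * A = 1\<^sub>m n" "A * B = 1\<^sub>m n"
    unfolding Units_def by (auto simp: ring_mat_simps ring_mat_def)
  then show "invertible_mat A"
    using A unfolding invertible_mat_def inverts_mat_def by auto
qed

lemma inverse_mat_from_adjugate:
  fixes A B :: "'a::field mat"
  assumes A: "A \<in> carrier_mat n n" and B: "B \<in> carrier_mat n n"
    and AB: "A * B = det A \<cdot>\<^sub>m 1\<^sub>m n" and det: "det A \<noteq> 0"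
  shows "A * (1 / det A \<cdot>\<^sub>m B) = 1\<^sub>m n" and "(1 / det A \<cdot>\<^sub>m B) * A = 1\<^sub>m n"
    and "det (1 / det A \<cdot>\<^sub>m B) = 1 / det A"
proof -
  have B': "1 / det A \<cdot>\<^sub>m B \<in> carrier_mat n n"
    using B by simp
  have "1 / det A \<cdot>\<^sub>m (det A \<cdot>\<^sub>m 1\<^sub>m n) = 1\<^sub>m n"
    using det by (intro eq_matI) auto
  then show AB': "A * (1 / det A \<cdot>\<^sub>m B) = 1\<^sub>m n"
    by (simp add: mult_smult_distrib[OF A B] AB)
  show "(1 / det A \<cdot>\<^sub>m B) * A = 1\<^sub>m n"
    by (rule mat_mult_left_right_inverse[OF A B' AB'])
  have "det A * det (1 / det A \<cdot>\<^sub>m B) = 1"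
    using det_mult[OF A B'] AB' by simp
  then show "det (1 / det A \<cdot>\<^sub>m B) = 1 / det A"
    using det by (simp add: field_simps)
qed

lemma PhiJ_eq_continuant: "PhiJ a b c k = continuant b (\<lambda>i. a i * c i) k"
proof -
  consider "k = 0" | "k = 1" | p where "k = Suc (Suc p)"
    by (metis One_nat_def not0_implies_Suc)
  then show ?thesis
  proof cases
    case 2
    then show ?thesis
      using chebP_eq_continuant[of b "pmul a c" 0] by (simp add: PhiJ_def chebP_def)
  next
    case (3 p)
    then have k1: "int k - 1 = int (Suc p)" and k2: "int k - 2 = int p"
      by simp_all
    show ?thesis
      unfolding PhiJ_def k1 k2 chebP_eq_continuant using 3
      by (simp add: continuant_Suc_Suc_left shift_def pmul_def del: continuant.simps(3))
  qed (simp add: PhiJ_def)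
qed

lemma PsiJ_eq_tail_continuant:
  assumes "k \<le> n + 1"
  shows "PsiJ n a b c k = tail_continuant n b (\<lambda>i. a i * c i) k"
proof (cases "k = n + 1")
  case False
  with assms obtain d where n: "n = k + d"
    using le_Suc_ex by fastforce
  have "PsiJ n a b c k = chebP (shift k b) (shift k (pmul a c)) (int d + 1)"
    using False chebP_Suc[of "shift k b" "shift k (pmul a c)" d]
    by (simp add: PsiJ_def n shift_def pmul_def algebra_simps)
  also have "\<dots> = tail_continuant n b (\<lambda>i. a i * c i) k"
    using chebP_eq_continuant[of _ _ "Suc d"]
    by (simp add: tail_continuant_def n shift_def pmul_def algebra_simps)
  finally show ?thesis .
qed (simp add: PsiJ_def)

(* The hypothesis is needed: DJ 0 a b c = b 0 * b 1 rather than b 0 * b 1 - a 0 * c 0. *)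
lemma DJ_eq_PhiJ:
  assumes "n \<ge> 1"
  shows "DJ n a b c = PhiJ a b c (n + 2)"
proof -
  obtain p where n: "n = Suc p"
    using assms by (cases n) auto
  have "b (n + 1) * chebP (shift 1 b) (shift 1 (pmul a c)) (int n - 1)
      - a n * c n * chebP (shift 1 b) (shift 1 (pmul a c)) (int n - 2)
      = chebP (shift 1 b) (shift 1 (pmul a c)) (int n)"
    using chebP_Suc[of "shift 1 b" "shift 1 (pmul a c)" p]
    by (simp add: n shift_def pmul_def algebra_simps)
  moreover have "b (n + 1) * chebP b (pmul a c) (int n) - a n * c n * chebP b (pmul a c) (int n - 1)
      = chebP b (pmul a c) (int n + 1)"
    using chebP_Suc[of b "pmul a c" n] by (simp add: pmul_def)
  moreover have "int (n + 2) - 1 = int n + 1" and "int (n + 2) - 2 = int n"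
    by simp_all
  ultimately show ?thesis
    by (simp only: DJ_def PhiJ_def) simp
qed

theorem theorem4p3:
  fixes n :: nat and a b c :: "nat \<Rightarrow> real"
  assumes "n \<ge> 1"
    and "\<forall>k\<le>n. a k \<noteq> 0"
    and "\<forall>k\<le>n. c k \<noteq> 0"
  shows "(invertible_mat (Jmat n a b c) \<longleftrightarrow> DJ n a b c \<noteq> 0) \<and>
         (DJ n a b c \<noteq> 0 \<longrightarrow>
            Jmat n a b c * Rmat n a b c = 1\<^sub>m (n + 2) \<and>
            Rmat n a b c * Jmat n a b c = 1\<^sub>m (n + 2) \<and>
            det (Rmat n a b c) = 1 / DJ n a b c)"
proof -
  have J: "Jmat n a b c = tridiag_mat (n + 2) a b c"
    by (simp add: Jmat_def tridiag_mat_def)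
  have D: "DJ n a b c = det (Jmat n a b c)"
    using assms(1) by (simp add: DJ_eq_PhiJ PhiJ_eq_continuant J det_tridiag_mat)
  have R: "Rmat n a b c = 1 / det (Jmat n a b c) \<cdot>\<^sub>m tridiag_adj n a b c"
    by (rule eq_matI) (auto simp: Rmat_def tridiag_adj_def tridiag_adj_entry_def D[symmetric]
        PhiJ_eq_continuant PsiJ_eq_tail_continuant)
  have adj: "Jmat n a b c * tridiag_adj n a b c = det (Jmat n a b c) \<cdot>\<^sub>m 1\<^sub>m (n + 2)"
    unfolding J by (rule tridiag_mat_mult_adj)
  have "Jmat n a b c \<in> carrier_mat (n + 2) (n + 2)"
    unfolding J by (rule tridiag_mat_carrier)
  then show ?thesis
    unfolding R D
    using invertible_mat_iff_det_nonzero inverse_mat_from_adjugate[OF _ tridiag_adj_carrier adj]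
    by blast
qed

end
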